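(* For every even integer $k\geq 4$, there exists a permutation graph $G$ with a matching $M$ in it such that the only alternating cycle with respect to $M$ in $G$ has length $k$.
   Context: Graphs are finite, simple, undirected. For a permutation $\pi$ of $\{1,\dots,n\}$, $G_\pi$ has vertex set $\{1,\dots,n\}$ and edges $ij$ with $(i-j)(\pi(i)-\pi(j))<0$; a permutation graph is a graph isomorphic to some $G_\pi$. A matching is a set of pairwise vertex-disjoint edges. Given a matching $M$, an alternating cycle with respect to $M$ is an even cycle of $G$ in which every second edge belongs to $M$. *)

theory Defs
  imports Main
begin

definition perm_graph_edges :: "nat \<Rightarrow> (nat \<Rightarrow> nat) \<Rightarrow> nat set set" where
  "perm_graph_edges n \<pi> =
     {{i, j} | i j. i \<in> {1..n} \<and> j \<in> {1..n} \<and>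
        (int i - int j) * (int (\<pi> i) - int (\<pi> j)) < 0}"

definition is_matching :: "nat set set \<Rightarrow> nat set set \<Rightarrow> bool" where
  "is_matching E M \<longleftrightarrow> M \<subseteq> E \<and> (\<forall>e\<in>M. \<forall>f\<in>M. e \<noteq> f \<longrightarrow> e \<inter> f = {})"

definition cyc_edge :: "nat list \<Rightarrow> nat \<Rightarrow> nat set" where
  "cyc_edge vs i = {vs ! i, vs ! ((i + 1) mod length vs)}"

definition alt_cycle :: "nat set set \<Rightarrow> nat set set \<Rightarrow> nat set set \<Rightarrow> bool" where
  "alt_cycle E M C \<longleftrightarrow>
     (\<exists>vs. distinct vs \<and> length vs \<ge> 3 \<and> even (length vs) \<and>
        (\<forall>i < length vs. cyc_edge vs i \<in> E) \<and>
        (\<forall>i < length vs. cyc_edge vs i \<in> M \<longleftrightarrow> even i) \<and>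
        C = cyc_edge vs ` {..<length vs})"

end

theory Submission
  imports Defs
begin

text \<open>
  Take \<open>n = k = 2m\<close>, let \<open>\<pi>\<close> send each odd \<open>2j+1\<close> to \<open>2j+4\<close> and each even \<open>2j+2\<close> to
  \<open>2j-1\<close>, except that \<open>2\<close> and \<open>2m-1\<close> are fixed, and let \<open>M\<close> pair \<open>2j+1\<close> with \<open>2j+2\<close>.
  Apart from \<open>M\<close>, every edge of \<open>G\<^sub>\<pi>\<close> joins an odd \<open>u\<close> to \<open>u+3\<close> or \<open>u+5\<close>, or is one of
  \<open>{2,4}\<close>, \<open>{2m-3,2m-1}\<close>.  In an alternating cycle every vertex has its \<open>M\<close>-partner and exactly
  one non-matching edge.  Walking down along non-matching edges shows that \<open>2\<close> lies on the cycle,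
  and its non-matching edge can only be \<open>{2,4}\<close>.  Inductively, the non-matching edge at \<open>2j+1\<close>
  cannot end in \<open>2j+4\<close>, which already carries \<open>{2j-1,2j+4}\<close> (or \<open>{2,4}\<close>), so it is
  \<open>{2j+1,2j+6}\<close>; at the top \<open>{2m-3,2m-1}\<close> is forced.  These \<open>2m\<close> forced edges form an
  alternating cycle, and as an alternating cycle has no more edges than vertices (at most \<open>2m\<close>),
  every alternating cycle equals it.
\<close>

lemma Suc_mod_eq_if: "i < n \<Longrightarrow> Suc i mod n = (if Suc i = n then 0 else Suc i)"
  by (simp add: mod_Suc)

lemma Suc_mod_less: "i < n \<Longrightarrow> Suc i mod n < (n::nat)"
  by simp

lemma nth_mem_cyc_edge_iff:
  assumes "distinct vs" "i < length vs" "j < length vs"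
  shows "vs ! j \<in> cyc_edge vs i \<longleftrightarrow> j = i \<or> j = Suc i mod length vs"
proof -
  have "Suc i mod length vs < length vs" using assms(2) by (rule Suc_mod_less)
  then show ?thesis using assms by (auto simp: cyc_edge_def nth_eq_iff_index_eq)
qed

lemma Union_cyc_edges: "\<Union> (cyc_edge vs ` {..<length vs}) = set vs"
proof
  show "\<Union> (cyc_edge vs ` {..<length vs}) \<subseteq> set vs"
    by (auto simp: cyc_edge_def Suc_mod_less)
  show "set vs \<subseteq> \<Union> (cyc_edge vs ` {..<length vs})"
    by (auto simp: cyc_edge_def in_set_conv_nth)
qed

lemma inj_on_cyc_edge:
  assumes "distinct vs" "length vs \<ge> 3"
  shows "inj_on (cyc_edge vs) {..<length vs}"
proof
  fix a b assume a: "a \<in> {..<length vs}" and b: "b \<in> {..<length vs}"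
    and eq: "cyc_edge vs a = cyc_edge vs b"
  have "vs ! a \<in> cyc_edge vs b" "vs ! b \<in> cyc_edge vs a"
    using eq by (auto simp: cyc_edge_def)
  then have "a = b \<or> a = Suc b mod length vs \<and> b = Suc a mod length vs"
    using a b nth_mem_cyc_edge_iff[OF assms(1)] by auto
  then show "a = b"
    using a b assms(2) by (auto simp: Suc_mod_eq_if split: if_splits)
qed

lemma nth_mem_cyc_edge_parities:
  assumes "even (length vs)" "j < length vs"
  shows "\<exists>i<length vs. even i \<and> vs ! j \<in> cyc_edge vs i"
    and "\<exists>i<length vs. odd i \<and> vs ! j \<in> cyc_edge vs i"
proof -
  define p where "p = (if j = 0 then length vs - 1 else j - 1)"
  have p: "p < length vs" "Suc p mod length vs = j" "even p \<longleftrightarrow> odd j"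
    using assms by (auto simp: p_def Suc_mod_eq_if)
  have "vs ! j \<in> cyc_edge vs j" "vs ! j \<in> cyc_edge vs p"
    using p by (auto simp: cyc_edge_def)
  then show "\<exists>i<length vs. even i \<and> vs ! j \<in> cyc_edge vs i"
    and "\<exists>i<length vs. odd i \<and> vs ! j \<in> cyc_edge vs i"
    using assms(2) p by (cases "even j"; blast)+
qed

lemma alt_cycle_subset: "alt_cycle E M C \<Longrightarrow> C \<subseteq> E"
  by (auto simp: alt_cycle_def)

lemma alt_cycle_finite: "alt_cycle E M C \<Longrightarrow> finite C"
  by (auto simp: alt_cycle_def)

lemma alt_cycle_Union_nonempty: "alt_cycle E M C \<Longrightarrow> \<Union>C \<noteq> {}"
  unfolding alt_cycle_def by (metis Union_cyc_edges length_0_conv not_numeral_le_zero set_empty)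

lemma alt_cycle_card_le: "alt_cycle E M C \<Longrightarrow> card C \<le> card (\<Union>C)"
  unfolding alt_cycle_def
  by (metis Union_cyc_edges card_image_le card_lessThan distinct_card finite_lessThan)

lemma alt_cycle_vertex_edges:
  assumes "alt_cycle E M C" "v \<in> \<Union>C"
  shows "\<exists>e\<in>C. e \<in> M \<and> v \<in> e" and "\<exists>e\<in>C. e \<notin> M \<and> v \<in> e"
proof -
  obtain vs where vs: "even (length vs)" "\<forall>i < length vs. cyc_edge vs i \<in> M \<longleftrightarrow> even i"
    and C: "C = cyc_edge vs ` {..<length vs}"
    using assms(1) unfolding alt_cycle_def by blast
  obtain j where j: "j < length vs" "v = vs ! j"
    using assms(2) by (auto simp: C Union_cyc_edges in_set_conv_nth)
  show "\<exists>e\<in>C. e \<in> M \<and> v \<in> e" "\<exists>e\<in>C. e \<notin> M \<and> v \<in> e"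
    using nth_mem_cyc_edge_parities[OF vs(1) j(1)] vs(2) j(2) by (auto simp: C)
qed

lemma alt_cycle_unmatched_edge_unique:
  assumes "alt_cycle E M C" "e \<in> C" "e' \<in> C" "e \<notin> M" "e' \<notin> M" "v \<in> e" "v \<in> e'"
  shows "e = e'"
proof -
  obtain vs where vs: "distinct vs" "even (length vs)"
      "\<forall>i < length vs. cyc_edge vs i \<in> M \<longleftrightarrow> even i"
    and C: "C = cyc_edge vs ` {..<length vs}"
    using assms(1) unfolding alt_cycle_def by blast
  obtain a b where ab: "a < length vs" "b < length vs" "e = cyc_edge vs a" "e' = cyc_edge vs b"
    using assms(2,3) C by blast
  have "odd a" "odd b" using ab assms(4,5) vs(3) by auto
  have "v \<in> set vs" using assms(2,6) Union_cyc_edges[of vs] C by blast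
  then obtain j where j: "j < length vs" "v = vs ! j" by (auto simp: in_set_conv_nth)
  have "j = a \<or> j = Suc a mod length vs" "j = b \<or> j = Suc b mod length vs"
    using assms(6,7) ab j nth_mem_cyc_edge_iff[OF vs(1)] by auto
  then have "a = b"
    using ab(1,2) \<open>odd a\<close> \<open>odd b\<close> vs(2) by (auto simp: Suc_mod_eq_if split: if_splits)
  then show ?thesis using ab by simp
qed

lemma in_perm_graph_edges_iff:
  "{u, v} \<in> perm_graph_edges n \<pi> \<longleftrightarrow>
     u \<in> {1..n} \<and> v \<in> {1..n} \<and> (int u - int v) * (int (\<pi> u) - int (\<pi> v)) < 0"
proof
  assume "{u, v} \<in> perm_graph_edges n \<pi>"
  then obtain i j where "{u, v} = {i, j}" "i \<in> {1..n}" "j \<in> {1..n}"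
      "(int i - int j) * (int (\<pi> i) - int (\<pi> j)) < 0"
    unfolding perm_graph_edges_def by blast
  then show "u \<in> {1..n} \<and> v \<in> {1..n} \<and> (int u - int v) * (int (\<pi> u) - int (\<pi> v)) < 0"
    by (auto simp: doubleton_eq_iff algebra_simps)
qed (auto simp: perm_graph_edges_def)

lemma ordered_pair_in_perm_graph_edges_iff:
  "u < w \<Longrightarrow> {u, w} \<in> perm_graph_edges n \<pi> \<longleftrightarrow> 1 \<le> u \<and> w \<le> n \<and> \<pi> w < \<pi> u"
  by (auto simp: in_perm_graph_edges_iff mult_less_0_iff)

lemma perm_graph_edges_vertices: "\<Union> (perm_graph_edges n \<pi>) \<subseteq> {1..n}"
  by (auto simp: perm_graph_edges_def)

lemma perm_graph_edge_through:
  "e \<in> perm_graph_edges n \<pi> \<Longrightarrow> v \<in> e \<Longrightarrow> \<exists>w. e = {v, w}"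
  by (auto simp: perm_graph_edges_def)

definition cycle_perm :: "nat \<Rightarrow> nat \<Rightarrow> nat" where
  "cycle_perm m v =
     (if odd v then (if v = 2*m - 1 then v else v + 3) else (if v = 2 then 2 else v - 3))"

abbreviation cycle_graph :: "nat \<Rightarrow> nat set set" where
  "cycle_graph m \<equiv> perm_graph_edges (2*m) (cycle_perm m)"

lemma bij_cycle_perm: "bij_betw (cycle_perm m) {1..2*m} {1..2*m}"
proof -
  have inj: "inj_on (cycle_perm m) {1..2*m}"
    by (rule inj_onI) (simp add: cycle_perm_def split: if_split_asm; presburger)
  have "cycle_perm m ` {1..2*m} \<subseteq> {1..2*m}"
    unfolding cycle_perm_def by (auto split: if_split_asm; presburger)
  then show ?thesis
    using inj endo_inj_surj[of "{1..2*m}" "cycle_perm m"] by (simp add: bij_betw_def)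
qed

lemma cycle_perm_inversion:
  assumes "1 \<le> u" "u < w" "w \<le> 2*m" "cycle_perm m w < cycle_perm m u"
  shows "odd u \<and> (w = u + 1 \<or> w = u + 3 \<or> w = u + 5) \<or> u = 2 \<and> w = 4 \<or>
    u = 2*m - 3 \<and> w = 2*m - 1"
  using assms unfolding cycle_perm_def by (simp split: if_split_asm; presburger)

definition pair_matching :: "nat \<Rightarrow> nat set set" where
  "pair_matching m = {{2*j + 1, 2*j + 2} | j. j < m}"

lemma odd_pair_in_pair_matching: "odd v \<Longrightarrow> v < 2*m \<Longrightarrow> {v, Suc v} \<in> pair_matching m"
  unfolding pair_matching_def by (elim oddE) auto

lemma pair_matching_consecutive: "{x, y} \<in> pair_matching m \<Longrightarrow> x = Suc y \<or> y = Suc x"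
  by (auto simp: pair_matching_def doubleton_eq_iff)

lemma is_matching_pair_matching:
  assumes "2 \<le> m"
  shows "is_matching (cycle_graph m) (pair_matching m)"
proof -
  have "cycle_perm m (2*j + 2) < cycle_perm m (2*j + 1)" if "j < m" for j
    using assms that unfolding cycle_perm_def by (simp split: if_split; presburger)
  then have "pair_matching m \<subseteq> cycle_graph m"
    by (auto simp: pair_matching_def ordered_pair_in_perm_graph_edges_iff)
  moreover have "e \<inter> f = {}" if ef: "e \<in> pair_matching m" "f \<in> pair_matching m" "e \<noteq> f" for e f
  proof -
    obtain i j where ij: "e = {2*i + 1, 2*i + 2}" "f = {2*j + 1, 2*j + 2}"
      using ef(1,2) unfolding pair_matching_def by blast
    with ef(3) have "i \<noteq> j" by blast
    then show ?thesis unfolding ij by auto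
  qed
  ultimately show ?thesis by (auto simp: is_matching_def)
qed

definition cycle_bridges :: "nat \<Rightarrow> nat set set" where
  "cycle_bridges m = {{2, 4}, {2*m - 3, 2*m - 1}} \<union> {{2*j + 1, 2*j + 6} | j. j + 3 \<le> m}"

lemma cycle_bridgeI: "j + 3 \<le> m \<Longrightarrow> {2*j + 1, 2*j + 6} \<in> cycle_bridges m"
  by (auto simp: cycle_bridges_def)

lemma cycle_bridges_subset: "2 \<le> m \<Longrightarrow> cycle_bridges m \<subseteq> cycle_graph m"
  by (auto simp: cycle_bridges_def ordered_pair_in_perm_graph_edges_iff cycle_perm_def; presburger)

lemma cycle_bridge_unmatched: "2 \<le> m \<Longrightarrow> e \<in> cycle_bridges m \<Longrightarrow> e \<notin> pair_matching m"
  by (auto simp: cycle_bridges_def dest: pair_matching_consecutive)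

lemma cycle_graph_unmatched_edge:
  assumes "{v, w} \<in> cycle_graph m" "{v, w} \<notin> pair_matching m"
  shows "odd v \<and> (w = v + 3 \<or> w = v + 5) \<or> odd w \<and> (v = w + 3 \<or> v = w + 5) \<or>
    {v, w} = {2, 4} \<or> {v, w} = {2*m - 3, 2*m - 1}"
proof -
  have ordered: "odd u \<and> (x = u + 3 \<or> x = u + 5) \<or> u = 2 \<and> x = 4 \<or> u = 2*m - 3 \<and> x = 2*m - 1"
    if "u < x" "{u, x} \<in> cycle_graph m" "{u, x} \<notin> pair_matching m" for u x
  proof -
    have bounds: "1 \<le> u" "x \<le> 2*m" "cycle_perm m x < cycle_perm m u"
      using that(1,2) by (auto simp: ordered_pair_in_perm_graph_edges_iff)
    moreover have "\<not> (odd u \<and> x = u + 1)"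
      using odd_pair_in_pair_matching[of u m] that(3) bounds(2) by auto
    ultimately show ?thesis using cycle_perm_inversion that(1) by blast
  qed
  have "v \<noteq> w" using assms(1) by (auto simp: in_perm_graph_edges_iff)
  then consider "v < w" | "w < v" by linarith
  then show ?thesis
  proof cases
    case 1
    then show ?thesis using ordered[of v w] assms by blast
  next
    case 2
    moreover have "{w, v} = {v, w}" by blast
    ultimately show ?thesis using ordered[of w v] assms by auto
  qed
qed

text \<open>
  The forced cycle \<open>4, 3, 8, 7, 12, 11, \<dots>\<close> climbs through the pairs \<open>{4t+3, 4t+4}\<close> and comes
  back down through the pairs \<open>{4s+1, 4s+2}\<close>, ending with \<open>\<dots>, 5, 6, 1, 2\<close>.
\<close>

definition cycle_vertex :: "nat \<Rightarrow> nat \<Rightarrow> nat" where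
  "cycle_vertex m i =
     (if i div 2 < m div 2 then 4 * (i div 2) + 4 - i mod 2 else 4 * (m - 1 - i div 2) + 1 + i mod 2)"

definition cycle_walk :: "nat \<Rightarrow> nat list" where
  "cycle_walk m = map (cycle_vertex m) [0..<2*m]"

lemma length_cycle_walk [simp]: "length (cycle_walk m) = 2*m"
  by (simp add: cycle_walk_def)

lemma mult_4_add_residue_eq:
  "a < 4 \<Longrightarrow> b < 4 \<Longrightarrow> 4*x + a = 4*y + (b::nat) \<Longrightarrow> x = y \<and> a = b"
  by (drule arg_cong[where f = "\<lambda>v. (v div 4, v mod 4)"]) auto

lemma cycle_vertex_residue:
  "cycle_vertex m i =
     4 * (if i div 2 < m div 2 then i div 2 + 1 - i mod 2 else m - 1 - i div 2) +
     (if i div 2 < m div 2 then 3 * (i mod 2) else 1 + i mod 2)"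
  by (cases "even i") (auto simp: cycle_vertex_def)

text \<open>The residue mod 4 is 0 or 3 on the climbing half of the walk and 1 or 2 on the way down.\<close>

lemma inj_on_cycle_vertex: "inj_on (cycle_vertex m) {..<2*m}"
proof (rule inj_onI)
  fix i j assume ij: "i \<in> {..<2*m}" "j \<in> {..<2*m}" "cycle_vertex m i = cycle_vertex m j"
  let ?q = "\<lambda>i. if i div 2 < m div 2 then i div 2 + 1 - i mod 2 else m - 1 - i div 2"
  let ?r = "\<lambda>i. if i div 2 < m div 2 then 3 * (i mod 2) else 1 + i mod 2"
  have "?r i < 4" "?r j < 4" by auto
  from mult_4_add_residue_eq[OF this ij(3)[unfolded cycle_vertex_residue]]
  have "?q i = ?q j" "?r i = ?r j" by blast+
  moreover have "i mod 2 = 0 \<or> i mod 2 = 1" "j mod 2 = 0 \<or> j mod 2 = 1"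
    "i div 2 < m" "j div 2 < m" using ij(1,2) by auto
  ultimately have "i div 2 = j div 2 \<and> i mod 2 = j mod 2"
    by (auto split: if_splits) arith
  then show "i = j" by (metis div_mult_mod_eq)
qed

lemma distinct_cycle_walk: "distinct (cycle_walk m)"
  using inj_on_cycle_vertex by (simp add: cycle_walk_def distinct_map atLeast0LessThan)

lemma cyc_edge_cycle_walk:
  "i < 2*m \<Longrightarrow> cyc_edge (cycle_walk m) i = {cycle_vertex m i, cycle_vertex m (Suc i mod (2*m))}"
  by (simp add: cyc_edge_def cycle_walk_def Suc_mod_less)

lemma cycle_vertex_even: "cycle_vertex m (2*t) = (if t < m div 2 then 4*t + 4 else 4*(m - 1 - t) + 1)"
  by (simp add: cycle_vertex_def)

lemma cycle_vertex_odd: "cycle_vertex m (Suc (2*t)) = (if t < m div 2 then 4*t + 3 else 4*(m - 1 - t) + 2)"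
  by (simp add: cycle_vertex_def)

lemma cycle_vertex_matched_pair:
  assumes "t < m"
  shows "{cycle_vertex m (2*t), cycle_vertex m (Suc (2*t))} \<in> pair_matching m"
proof -
  define j where "j = (if t < m div 2 then 2*t + 1 else 2*(m - 1 - t))"
  have "j < m" "{cycle_vertex m (2*t), cycle_vertex m (Suc (2*t))} = {2*j + 1, 2*j + 2}"
    using assms by (auto simp: j_def cycle_vertex_even cycle_vertex_odd)
  then show ?thesis unfolding pair_matching_def by blast
qed

lemma cycle_vertex_bridge:
  assumes "Suc t < m"
  shows "{cycle_vertex m (Suc (2*t)), cycle_vertex m (2 * Suc t)} \<in> cycle_bridges m"
proof -
  note v = cycle_vertex_odd[of m t] cycle_vertex_even[of m "Suc t"]
  consider "Suc t < m div 2" | "Suc t = m div 2" | "m div 2 \<le> t" by linarith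
  then show ?thesis
  proof cases
    case 1
    define j where "j = 2*t + 1"
    have "cycle_vertex m (Suc (2*t)) = 2*j + 1" "cycle_vertex m (2 * Suc t) = 2*j + 6" "j + 3 \<le> m"
      using 1 v by (auto simp: j_def)
    then show ?thesis using cycle_bridgeI by simp
  next
    case 2
    then have "m = 2*t + 2 \<or> m = 2*t + 3" by linarith
    then have "{cycle_vertex m (Suc (2*t)), cycle_vertex m (2 * Suc t)} = {2*m - 3, 2*m - 1}"
      using 2 v by auto
    then show ?thesis unfolding cycle_bridges_def by blast
  next
    case 3
    define j where "j = 2*(m - 2 - t)"
    have "cycle_vertex m (Suc (2*t)) = 2*j + 6" "cycle_vertex m (2 * Suc t) = 2*j + 1" "j + 3 \<le> m"
      using 3 assms v by (auto simp: j_def)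
    then show ?thesis using cycle_bridgeI by (simp add: insert_commute)
  qed
qed

lemma cycle_vertex_closing_bridge:
  assumes "2 \<le> m"
  shows "{cycle_vertex m (Suc (2*(m - 1))), cycle_vertex m (2*0)} \<in> cycle_bridges m"
proof -
  have "cycle_vertex m (Suc (2*(m - 1))) = 2" "cycle_vertex m (2*0) = 4"
    using assms cycle_vertex_odd[of m "m - 1"] cycle_vertex_even[of m 0] by auto
  then show ?thesis by (simp add: cycle_bridges_def)
qed

lemma cycle_walk_edge:
  assumes "2 \<le> m" "i < 2*m"
  shows "cyc_edge (cycle_walk m) i \<in> (if even i then pair_matching m else cycle_bridges m)"
proof -
  define t where "t = i div 2"
  have t: "t < m" using assms(2) by (simp add: t_def)
  have edge: "cyc_edge (cycle_walk m) i = {cycle_vertex m i, cycle_vertex m (Suc i mod (2*m))}"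
    using assms(2) by (rule cyc_edge_cycle_walk)
  show ?thesis
  proof (cases "even i")
    case True
    then have "i = 2*t" "Suc i mod (2*m) = Suc (2*t)" using t by (auto simp: t_def)
    then show ?thesis using True edge cycle_vertex_matched_pair[OF t] by simp
  next
    case False
    then have i: "i = Suc (2*t)" by (simp add: t_def)
    show ?thesis
    proof (cases "Suc t < m")
      case True
      then have "Suc i mod (2*m) = 2 * Suc t" using i by simp
      then show ?thesis using False edge i cycle_vertex_bridge[OF True] by simp
    next
      case last: False
      then have m: "m = Suc t" using t by simp
      then have "Suc i mod (2*m) = 2*0" "t = m - 1" using i by simp_all
      then show ?thesis using False edge i cycle_vertex_closing_bridge[OF assms(1)] by simp
    qed
  qed
qed

lemma alt_cycle_cycle_walk:
  assumes "2 \<le> m"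
  shows "alt_cycle (cycle_graph m) (pair_matching m) (cyc_edge (cycle_walk m) ` {..<2*m})"
  unfolding alt_cycle_def
proof (intro exI conjI allI impI)
  fix i assume "i < length (cycle_walk m)"
  then have "cyc_edge (cycle_walk m) i \<in> (if even i then pair_matching m else cycle_bridges m)"
    using cycle_walk_edge[OF assms] by simp
  then show "cyc_edge (cycle_walk m) i \<in> cycle_graph m"
    and "cyc_edge (cycle_walk m) i \<in> pair_matching m \<longleftrightarrow> even i"
    using is_matching_pair_matching[OF assms] cycle_bridges_subset[OF assms]
      cycle_bridge_unmatched[OF assms]
    by (auto simp: is_matching_def split: if_splits)
qed (use assms distinct_cycle_walk in auto)

lemma card_cycle_walk_edges:
  "2 \<le> m \<Longrightarrow> card (cyc_edge (cycle_walk m) ` {..<2*m}) = 2*m"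
  using inj_on_cyc_edge[OF distinct_cycle_walk, of m] by (simp add: card_image)

lemma cycle_walk_edges_subset:
  "2 \<le> m \<Longrightarrow> cyc_edge (cycle_walk m) ` {..<2*m} \<subseteq> pair_matching m \<union> cycle_bridges m"
  using cycle_walk_edge by (fastforce split: if_splits)

context
  fixes m :: nat and C :: "nat set set"
  assumes two_le_m: "2 \<le> m"
    and alt: "alt_cycle (cycle_graph m) (pair_matching m) C"
begin

lemma odd_last_bridge_ends: "odd (2*m - 3)" "odd (2*m - 1)"
  using two_le_m by presburger+

lemma cycle_vertices_le: "v \<in> \<Union>C \<Longrightarrow> v \<le> 2*m"
  using alt_cycle_subset[OF alt] perm_graph_edges_vertices by fastforce

lemma matched_pair_in_cycle:
  assumes "v \<in> \<Union>C" "odd u" "v = u \<or> v = Suc u"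
  shows "{u, Suc u} \<in> C"
proof -
  obtain e where e: "e \<in> C" "e \<in> pair_matching m" "v \<in> e"
    using alt_cycle_vertex_edges(1)[OF alt assms(1)] by blast
  then obtain j where j: "e = {2*j + 1, 2*j + 2}" by (auto simp: pair_matching_def)
  with e(3) assms(2,3) have "u = 2*j + 1" by auto
  then show ?thesis using e(1) j by simp
qed

lemma unmatched_neighbour: "v \<in> \<Union>C \<Longrightarrow> \<exists>w. {v, w} \<in> C \<and> {v, w} \<notin> pair_matching m"
  using alt_cycle_vertex_edges(2)[OF alt] alt_cycle_subset[OF alt] perm_graph_edge_through
  by (metis subsetD)

lemma unmatched_cycle_edge_cases:
  "{v, w} \<in> C \<Longrightarrow> {v, w} \<notin> pair_matching m \<Longrightarrow>
    odd v \<and> (w = v + 3 \<or> w = v + 5) \<or> odd w \<and> (v = w + 3 \<or> v = w + 5) \<or>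
    {v, w} = {2, 4} \<or> {v, w} = {2*m - 3, 2*m - 1}"
  using alt_cycle_subset[OF alt] cycle_graph_unmatched_edge by blast

lemma two_in_cycle: "2 \<in> \<Union>C"
proof -
  have descent: "2 \<in> \<Union>C" if "v \<in> \<Union>C" "even v" for v
    using that
  proof (induction v rule: less_induct)
    case (less v)
    show ?case
    proof (cases "v = 2")
      case False
      obtain w where w: "{v, w} \<in> C" "{v, w} \<notin> pair_matching m"
        using unmatched_neighbour[OF less.prems(1)] by blast
      note cases = unmatched_cycle_edge_cases[OF w]
      have "\<exists>u\<in>\<Union>C. even u \<and> u < v"
      proof (cases "odd w")
        case True
        then have "Suc w \<in> \<Union>C" using w(1) matched_pair_in_cycle[of w w] by blast
        moreover have "v = w + 3 \<or> v = w + 5"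
          using cases True less.prems(2) odd_last_bridge_ends by (auto simp: doubleton_eq_iff)
        ultimately show ?thesis using True by (intro bexI[of _ "Suc w"]) auto
      next
        case False
        then have "v = 4 \<and> w = 2"
          using cases less.prems(2) \<open>v \<noteq> 2\<close> odd_last_bridge_ends by (auto simp: doubleton_eq_iff)
        then show ?thesis using w(1) by (intro bexI[of _ w]) auto
      qed
      then show ?thesis using less.IH by blast
    qed (use less.prems in simp)
  qed
  obtain v where v: "v \<in> \<Union>C" using alt_cycle_Union_nonempty[OF alt] by blast
  show ?thesis
  proof (cases "even v")
    case False
    then have "Suc v \<in> \<Union>C" using v matched_pair_in_cycle[of v v] by blast
    then show ?thesis using False descent by simp
  qed (use v descent in blast)
qed

lemma first_bridge_in_cycle: "{2, 4} \<in> C"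
proof -
  obtain w where w: "{2, w} \<in> C" "{2, w} \<notin> pair_matching m"
    using unmatched_neighbour[OF two_in_cycle] by blast
  have "{2, w} \<noteq> {2*m - 3, 2*m - 1}"
  proof
    assume "{2, w} = {2*m - 3, 2*m - 1}"
    then have "(2::nat) \<in> {2*m - 3, 2*m - 1}" by (metis insertI1)
    then show False using odd_last_bridge_ends by fastforce
  qed
  then have "{2, w} = {2, 4}" using unmatched_cycle_edge_cases[OF w] by auto
  then show ?thesis using w by simp
qed

lemma next_bridge_in_cycle:
  assumes "2*j + 2 \<in> \<Union>C" "j + 3 \<le> m"
    and e: "e \<in> C" "e \<notin> pair_matching m" "2*j + 4 \<in> e" "2*j + 1 \<notin> e"
  shows "{2*j + 1, 2*j + 6} \<in> C"
proof -
  have "{2*j + 1, Suc (2*j + 1)} \<in> C" using matched_pair_in_cycle[OF assms(1)] by simp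
  then obtain w where w: "{2*j + 1, w} \<in> C" "{2*j + 1, w} \<notin> pair_matching m"
    using unmatched_neighbour by blast
  have "w = 2*j + 4 \<or> w = 2*j + 6"
    using unmatched_cycle_edge_cases[OF w] assms(2) odd_last_bridge_ends
    by (auto simp: doubleton_eq_iff) presburger+
  moreover have "w \<noteq> 2*j + 4"
  proof
    assume "w = 2*j + 4"
    then have "e = {2*j + 1, w}"
      using alt_cycle_unmatched_edge_unique[OF alt e(1) w(1) e(2) w(2) e(3)] by simp
    then show False using e(4) by simp
  qed
  ultimately show ?thesis using w(1) by simp
qed

lemma even_vertex_in_cycle:
  assumes "\<And>i. j = i + 2 \<Longrightarrow> {2*i + 1, 2*i + 6} \<in> C"
  shows "2*j + 2 \<in> \<Union>C"
proof -
  consider "j = 0" | "j = 1" | i where "j = i + 2"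
    by (metis One_nat_def add_2_eq_Suc' nat.exhaust)
  then show ?thesis
  proof cases
    case 1
    then have "2*j + 2 = 2" by simp
    then show ?thesis using two_in_cycle by (simp only:)
  next
    case 2
    then have "2*j + 2 = 4" by simp
    then show ?thesis using first_bridge_in_cycle by (metis UnionI insertCI)
  next
    case 3
    then have "{2*i + 1, 2*i + 6} \<in> C" "2*j + 2 = 2*i + 6" using assms by simp_all
    then show ?thesis by (metis UnionI insertCI)
  qed
qed

lemma bridge_in_cycle: "j + 3 \<le> m \<Longrightarrow> {2*j + 1, 2*j + 6} \<in> C"
proof (induction j rule: less_induct)
  case (less j)
  have "2*j + 2 \<in> \<Union>C" using less by (intro even_vertex_in_cycle) auto
  moreover obtain e where "e \<in> C" "e \<notin> pair_matching m" "2*j + 4 \<in> e" "2*j + 1 \<notin> e"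
  proof (cases j)
    case 0
    then show thesis
      using that first_bridge_in_cycle cycle_bridge_unmatched[OF two_le_m]
      by (auto simp: cycle_bridges_def)
  next
    case (Suc i)
    then have "{2*i + 1, 2*i + 6} \<in> C" using less by simp
    then show thesis
      using that Suc cycle_bridge_unmatched[OF two_le_m cycle_bridgeI, of i] less.prems by auto
  qed
  ultimately show ?case using next_bridge_in_cycle less.prems by blast
qed

lemma pair_matching_subset_cycle: "pair_matching m \<subseteq> C"
proof
  fix e assume "e \<in> pair_matching m"
  then obtain j where j: "j < m" "e = {2*j + 1, 2*j + 2}" by (auto simp: pair_matching_def)
  have "2*j + 2 \<in> \<Union>C" using j(1) bridge_in_cycle by (intro even_vertex_in_cycle) auto
  then show "e \<in> C" using matched_pair_in_cycle[of "2*j + 2" "2*j + 1"] j(2) by simp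
qed

lemma last_bridge_in_cycle: "{2*m - 3, 2*m - 1} \<in> C"
proof -
  have "{2*m - 1, Suc (2*m - 1)} \<in> C"
    using pair_matching_subset_cycle odd_pair_in_pair_matching[of "2*m - 1" m] odd_last_bridge_ends
      two_le_m by auto
  then obtain w where w: "{2*m - 1, w} \<in> C" "{2*m - 1, w} \<notin> pair_matching m"
    using unmatched_neighbour by blast
  then have "w \<le> 2*m" using cycle_vertices_le by blast
  then have "{2*m - 1, w} = {2*m - 3, 2*m - 1}"
    using unmatched_cycle_edge_cases[OF w] two_le_m odd_last_bridge_ends
    by (auto simp: doubleton_eq_iff) presburger+
  then show ?thesis using w(1) by simp
qed

lemma forced_edges_subset_cycle: "pair_matching m \<union> cycle_bridges m \<subseteq> C"
proof -
  have "{{2*j + 1, 2*j + 6} | j. j + 3 \<le> m} \<subseteq> C" using bridge_in_cycle by blast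
  then show ?thesis
    using pair_matching_subset_cycle first_bridge_in_cycle last_bridge_in_cycle
    unfolding cycle_bridges_def by blast
qed

end

theorem theorem11:
  fixes k :: nat
  assumes "even k" and "k \<ge> 4"
  shows "\<exists>n \<pi> M. bij_betw \<pi> {1..n} {1..n} \<and>
           is_matching (perm_graph_edges n \<pi>) M \<and>
           (\<exists>C. alt_cycle (perm_graph_edges n \<pi>) M C \<and> card C = k \<and>
                (\<forall>C'. alt_cycle (perm_graph_edges n \<pi>) M C' \<longrightarrow> C' = C))"
proof -
  obtain m where k: "k = 2*m" using assms(1) by blast
  with assms(2) have m: "2 \<le> m" by simp
  define C where "C = cyc_edge (cycle_walk m) ` {..<2*m}"
  have unique: "C' = C" if C': "alt_cycle (cycle_graph m) (pair_matching m) C'" for C'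
  proof -
    have "C \<subseteq> C'"
      using cycle_walk_edges_subset[OF m] forced_edges_subset_cycle[OF m C'] unfolding C_def
      by (rule subset_trans)
    have "\<Union>C' \<subseteq> {1..2*m}"
      using Union_mono[OF alt_cycle_subset[OF C']] perm_graph_edges_vertices by blast
    have "card C' \<le> card (\<Union>C')" by (rule alt_cycle_card_le[OF C'])
    also have "\<dots> \<le> card {1..2*m}"
      using \<open>\<Union>C' \<subseteq> {1..2*m}\<close> by (rule card_mono[OF finite_atLeastAtMost])
    also have "\<dots> = card C" using card_cycle_walk_edges[OF m] by (simp add: C_def)
    finally show ?thesis using card_seteq[OF alt_cycle_finite[OF C'] \<open>C \<subseteq> C'\<close>] by simp
  qed
  show ?thesis
    using bij_cycle_perm is_matching_pair_matching[OF m] alt_cycle_cycle_walk[OF m]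
      card_cycle_walk_edges[OF m] unique unfolding k C_def by blast
qed

end
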